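(* Let $k$ be an algebraically closed field and $G$ a finite abelian group whose order is invertible in $k$. For any finite-dimensional $k$-algebra $\Lambda$ with a $G$-action, there is an isomorphism of algebras $\mathrm{Triv}(\Lambda G)\simeq\mathrm{Triv}(\Lambda)G$.
   Context: A $G$-action on $\Lambda$ is a left action by algebra automorphisms. The skew group algebra $\Lambda G$ is $\Lambda\otimes_k kG$ with multiplication $(\lambda\otimes g)(\mu\otimes h)=\lambda(g\cdot\mu)\otimes gh$. For an algebra $A$, $DA=\mathrm{Hom}_k(A,k)$ with its natural $A$-$A$-bimodule structure, and the trivial extension is $\mathrm{Triv}(A)=A\oplus DA$ with $(a,\phi)(b,\psi)=(ab,a\psi+\phi b)$. $G$ acts on $D\Lambda$ by $(g\cdot\phi)(b)=\phi(g^{-1}\cdot b)$ and on $\mathrm{Triv}(\Lambda)$ by $g\cdot(a,\phi)=(g\cdot a,g\cdot\phi)$; this is an action by algebra automorphisms, so $\mathrm{Triv}(\Lambda)G$ is defined. *)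

theory Defs
  imports "HOL-Algebra.Algebraic_Closure" "HOL-Algebra.Module"
begin

definition k_algebra :: "'k ring \<Rightarrow> ('k, 'a) module \<Rightarrow> bool" where
  "k_algebra K A \<longleftrightarrow> field K \<and> module K A \<and> ring A \<and>
     (\<forall>c\<in>carrier K. \<forall>x\<in>carrier A. \<forall>y\<in>carrier A.
        (c \<odot>\<^bsub>A\<^esub> x) \<otimes>\<^bsub>A\<^esub> y = c \<odot>\<^bsub>A\<^esub> (x \<otimes>\<^bsub>A\<^esub> y) \<and>
        x \<otimes>\<^bsub>A\<^esub> (c \<odot>\<^bsub>A\<^esub> y) = c \<odot>\<^bsub>A\<^esub> (x \<otimes>\<^bsub>A\<^esub> y))"

definition fin_dim :: "'k ring \<Rightarrow> ('k, 'a) module \<Rightarrow> bool" where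
  "fin_dim K A \<longleftrightarrow> (\<exists>S. finite S \<and> S \<subseteq> carrier A \<and>
     (\<forall>x\<in>carrier A. \<exists>c\<in>S \<rightarrow> carrier K. x = finsum A (\<lambda>s. c s \<odot>\<^bsub>A\<^esub> s) S))"

definition alg_iso :: "'k ring \<Rightarrow> ('k, 'a) module \<Rightarrow> ('k, 'b) module \<Rightarrow> ('a \<Rightarrow> 'b) \<Rightarrow> bool" where
  "alg_iso K A B f \<longleftrightarrow> f \<in> ring_iso A B \<and>
     (\<forall>c\<in>carrier K. \<forall>x\<in>carrier A. f (c \<odot>\<^bsub>A\<^esub> x) = c \<odot>\<^bsub>B\<^esub> f x)"

definition alg_isomorphic :: "'k ring \<Rightarrow> ('k, 'a) module \<Rightarrow> ('k, 'b) module \<Rightarrow> bool" where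
  "alg_isomorphic K A B \<longleftrightarrow> (\<exists>f. alg_iso K A B f)"

definition alg_action :: "'k ring \<Rightarrow> 'g monoid \<Rightarrow> ('k, 'a) module \<Rightarrow> ('g \<Rightarrow> 'a \<Rightarrow> 'a) \<Rightarrow> bool" where
  "alg_action K G A act \<longleftrightarrow>
     (\<forall>g\<in>carrier G. alg_iso K A A (act g)) \<and>
     (\<forall>x\<in>carrier A. act \<one>\<^bsub>G\<^esub> x = x) \<and>
     (\<forall>g\<in>carrier G. \<forall>h\<in>carrier G. \<forall>x\<in>carrier A.
        act (g \<otimes>\<^bsub>G\<^esub> h) x = act g (act h x))"

text \<open>Skew group algebra A G = A \<otimes>_k kG, realised as maps G \<rightarrow> A
  (the element \<Sum>_g a_g \<otimes> g corresponds to g \<mapsto> a_g), with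
  (\<lambda>\<otimes>g)(\<mu>\<otimes>h) = \<lambda>(g\<cdot>\<mu>)\<otimes>gh.\<close>
definition skew_group_alg :: "'g monoid \<Rightarrow> ('k, 'a) module \<Rightarrow> ('g \<Rightarrow> 'a \<Rightarrow> 'a) \<Rightarrow> ('k, 'g \<Rightarrow> 'a) module" where
  "skew_group_alg G A act =
     \<lparr> partial_object.carrier = carrier G \<rightarrow>\<^sub>E carrier A,
       monoid.mult = (\<lambda>u v. \<lambda>x\<in>carrier G.
                 finsum A (\<lambda>g. u g \<otimes>\<^bsub>A\<^esub> act g (v (inv\<^bsub>G\<^esub> g \<otimes>\<^bsub>G\<^esub> x))) (carrier G)),
       monoid.one = (\<lambda>x\<in>carrier G. if x = \<one>\<^bsub>G\<^esub> then \<one>\<^bsub>A\<^esub> else \<zero>\<^bsub>A\<^esub>),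
       ring.zero = (\<lambda>x\<in>carrier G. \<zero>\<^bsub>A\<^esub>),
       ring.add = (\<lambda>u v. \<lambda>x\<in>carrier G. u x \<oplus>\<^bsub>A\<^esub> v x),
       module.smult = (\<lambda>c u. \<lambda>x\<in>carrier G. c \<odot>\<^bsub>A\<^esub> u x) \<rparr>"

definition lin_dual :: "'k ring \<Rightarrow> ('k, 'a) module \<Rightarrow> ('a \<Rightarrow> 'k) set" where
  "lin_dual K A = {\<phi> \<in> carrier A \<rightarrow>\<^sub>E carrier K.
      (\<forall>x\<in>carrier A. \<forall>y\<in>carrier A. \<phi> (x \<oplus>\<^bsub>A\<^esub> y) = \<phi> x \<oplus>\<^bsub>K\<^esub> \<phi> y) \<and>
      (\<forall>c\<in>carrier K. \<forall>x\<in>carrier A. \<phi> (c \<odot>\<^bsub>A\<^esub> x) = c \<otimes>\<^bsub>K\<^esub> \<phi> x)}"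

text \<open>Trivial extension Triv(A) = A \<oplus> DA with (a,\<phi>)(b,\<psi>) = (ab, a\<psi> + \<phi>b), where
  (a\<psi>)(c) = \<psi>(ca) and (\<phi>b)(c) = \<phi>(bc).\<close>
definition triv_ext :: "'k ring \<Rightarrow> ('k, 'a) module \<Rightarrow> ('k, 'a \<times> ('a \<Rightarrow> 'k)) module" where
  "triv_ext K A =
     \<lparr> partial_object.carrier = carrier A \<times> lin_dual K A,
       monoid.mult = (\<lambda>(a, \<phi>) (b, \<psi>). (a \<otimes>\<^bsub>A\<^esub> b,
                 \<lambda>c\<in>carrier A. \<psi> (c \<otimes>\<^bsub>A\<^esub> a) \<oplus>\<^bsub>K\<^esub> \<phi> (b \<otimes>\<^bsub>A\<^esub> c))),
       monoid.one = (\<one>\<^bsub>A\<^esub>, \<lambda>c\<in>carrier A. \<zero>\<^bsub>K\<^esub>),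
       ring.zero = (\<zero>\<^bsub>A\<^esub>, \<lambda>c\<in>carrier A. \<zero>\<^bsub>K\<^esub>),
       ring.add = (\<lambda>(a, \<phi>) (b, \<psi>). (a \<oplus>\<^bsub>A\<^esub> b, \<lambda>c\<in>carrier A. \<phi> c \<oplus>\<^bsub>K\<^esub> \<psi> c)),
       module.smult = (\<lambda>t (a, \<phi>). (t \<odot>\<^bsub>A\<^esub> a, \<lambda>c\<in>carrier A. t \<otimes>\<^bsub>K\<^esub> \<phi> c)) \<rparr>"

definition triv_action :: "'g monoid \<Rightarrow> ('k, 'a) module \<Rightarrow> ('g \<Rightarrow> 'a \<Rightarrow> 'a)
    \<Rightarrow> 'g \<Rightarrow> 'a \<times> ('a \<Rightarrow> 'k) \<Rightarrow> 'a \<times> ('a \<Rightarrow> 'k)" where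
  "triv_action G A act g = (\<lambda>(a, \<phi>). (act g a, \<lambda>b\<in>carrier A. \<phi> (act (inv\<^bsub>G\<^esub> g) b)))"

end

theory Submission
  imports Defs
begin

text \<open>
  The isomorphism sends \<open>(u, \<Phi>) \<in> Triv(\<Lambda>G) = \<Lambda>G \<oplus> D(\<Lambda>G)\<close> to the element
  \<open>x \<mapsto> (u x, \<theta>\<^sub>\<Phi> x)\<close> of \<open>Triv(\<Lambda>)G\<close>, where \<open>\<theta>\<^sub>\<Phi> x \<in> D\<Lambda>\<close> is
  \<open>c \<mapsto> \<Phi>((x\<inverse>\<cdot>c) \<otimes> x\<inverse>)\<close>, i.e. \<open>\<Phi>\<close> evaluated at \<open>(1 \<otimes> x\<inverse>)(c \<otimes> 1)\<close>.
  Since the elements \<open>\<lambda> \<otimes> g\<close> span \<open>\<Lambda>G\<close>, a functional is recovered from its components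
  by \<open>\<Phi> U = \<Sum>\<^sub>g \<theta>\<^sub>\<Phi> g (g\<cdot>U(g\<inverse>))\<close>, and every family of components arises in this way,
  so the map is a linear bijection. Multiplicativity amounts to expanding
  \<open>\<Phi>'(((x\<inverse>\<cdot>c) \<otimes> x\<inverse>) u)\<close> and \<open>\<Phi>(u' ((x\<inverse>\<cdot>c) \<otimes> x\<inverse>))\<close> by this formula.
\<close>

section \<open>Linear duals, skew group algebras and trivial extensions\<close>

lemma lin_dualI:
  assumes "\<phi> \<in> extensional (carrier A)" and "\<And>x. x \<in> carrier A \<Longrightarrow> \<phi> x \<in> carrier K"
    and "\<And>x y. x \<in> carrier A \<Longrightarrow> y \<in> carrier A \<Longrightarrow> \<phi> (x \<oplus>\<^bsub>A\<^esub> y) = \<phi> x \<oplus>\<^bsub>K\<^esub> \<phi> y"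
    and "\<And>c x. c \<in> carrier K \<Longrightarrow> x \<in> carrier A \<Longrightarrow> \<phi> (c \<odot>\<^bsub>A\<^esub> x) = c \<otimes>\<^bsub>K\<^esub> \<phi> x"
  shows "\<phi> \<in> lin_dual K A"
  using assms unfolding lin_dual_def by (auto simp: PiE_iff)

lemma lin_dual_closed: "\<phi> \<in> lin_dual K A \<Longrightarrow> x \<in> carrier A \<Longrightarrow> \<phi> x \<in> carrier K"
  unfolding lin_dual_def by auto

lemma lin_dual_add:
  "\<phi> \<in> lin_dual K A \<Longrightarrow> x \<in> carrier A \<Longrightarrow> y \<in> carrier A \<Longrightarrow> \<phi> (x \<oplus>\<^bsub>A\<^esub> y) = \<phi> x \<oplus>\<^bsub>K\<^esub> \<phi> y"
  unfolding lin_dual_def by auto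

lemma lin_dual_smult:
  "\<phi> \<in> lin_dual K A \<Longrightarrow> c \<in> carrier K \<Longrightarrow> x \<in> carrier A \<Longrightarrow> \<phi> (c \<odot>\<^bsub>A\<^esub> x) = c \<otimes>\<^bsub>K\<^esub> \<phi> x"
  unfolding lin_dual_def by auto

lemma lin_dual_extensional: "\<phi> \<in> lin_dual K A \<Longrightarrow> \<phi> \<in> extensional (carrier A)"
  unfolding lin_dual_def PiE_def by auto

lemma lin_dual_eqI:
  "\<phi> \<in> lin_dual K A \<Longrightarrow> \<psi> \<in> lin_dual K A \<Longrightarrow> (\<And>x. x \<in> carrier A \<Longrightarrow> \<phi> x = \<psi> x) \<Longrightarrow> \<phi> = \<psi>"
  by (metis extensionalityI lin_dual_extensional)

lemma lin_dual_zero: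
  assumes "abelian_group K" "abelian_monoid A" "\<phi> \<in> lin_dual K A"
  shows "\<phi> \<zero>\<^bsub>A\<^esub> = \<zero>\<^bsub>K\<^esub>"
proof -
  interpret K: abelian_group K by fact
  interpret A: abelian_monoid A by fact
  have "\<phi> \<zero>\<^bsub>A\<^esub> \<oplus>\<^bsub>K\<^esub> \<phi> \<zero>\<^bsub>A\<^esub> = \<phi> \<zero>\<^bsub>A\<^esub>"
    using lin_dual_add[OF assms(3), of "\<zero>\<^bsub>A\<^esub>" "\<zero>\<^bsub>A\<^esub>"] by simp
  then show ?thesis
    using lin_dual_closed[OF assms(3) A.zero_closed] by simp
qed

lemma lin_dual_finsum:
  assumes "abelian_group K" "abelian_monoid A" "\<phi> \<in> lin_dual K A"
    and "finite I" "f \<in> I \<rightarrow> carrier A"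
  shows "\<phi> (finsum A f I) = (\<Oplus>\<^bsub>K\<^esub>i\<in>I. \<phi> (f i))"
proof -
  interpret K: abelian_group K by fact
  interpret A: abelian_monoid A by fact
  show ?thesis
    using assms(4,5)
  proof (induction I rule: finite_induct)
    case empty
    show ?case
      using lin_dual_zero[OF assms(1-3)] by simp
  next
    case (insert i I)
    have "(\<lambda>i. \<phi> (f i)) \<in> I \<rightarrow> carrier K"
      using insert.prems lin_dual_closed[OF assms(3)] by auto
    with insert show ?case
      by (simp add: A.finsum_closed lin_dual_add[OF assms(3)] lin_dual_closed[OF assms(3)])
  qed
qed

lemma skew_group_alg_carrier [simp]:
  "carrier (skew_group_alg G A act) = carrier G \<rightarrow>\<^sub>E carrier A"
  by (simp add: skew_group_alg_def)

lemma skew_group_alg_simps: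
  "u \<otimes>\<^bsub>skew_group_alg G A act\<^esub> v = (\<lambda>x\<in>carrier G.
     \<Oplus>\<^bsub>A\<^esub>g\<in>carrier G. u g \<otimes>\<^bsub>A\<^esub> act g (v (inv\<^bsub>G\<^esub> g \<otimes>\<^bsub>G\<^esub> x)))"
  "\<one>\<^bsub>skew_group_alg G A act\<^esub> = (\<lambda>x\<in>carrier G. if x = \<one>\<^bsub>G\<^esub> then \<one>\<^bsub>A\<^esub> else \<zero>\<^bsub>A\<^esub>)"
  "\<zero>\<^bsub>skew_group_alg G A act\<^esub> = (\<lambda>x\<in>carrier G. \<zero>\<^bsub>A\<^esub>)"
  "u \<oplus>\<^bsub>skew_group_alg G A act\<^esub> v = (\<lambda>x\<in>carrier G. u x \<oplus>\<^bsub>A\<^esub> v x)"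
  "c \<odot>\<^bsub>skew_group_alg G A act\<^esub> u = (\<lambda>x\<in>carrier G. c \<odot>\<^bsub>A\<^esub> u x)"
  by (simp_all add: skew_group_alg_def)

lemma skew_group_alg_abelian_monoid:
  assumes "abelian_monoid A"
  shows "abelian_monoid (skew_group_alg G A act)"
proof -
  interpret A: abelian_monoid A by fact
  show ?thesis
    by (rule abelian_monoidI)
       (auto simp: skew_group_alg_simps A.a_ac PiE_iff extensional_def restrict_def fun_eq_iff)
qed

lemma finsum_skew_group_alg_apply:
  assumes "abelian_monoid A" "finite I" "f \<in> I \<rightarrow> carrier (skew_group_alg G A act)"
    and "x \<in> carrier G"
  shows "finsum (skew_group_alg G A act) f I x = (\<Oplus>\<^bsub>A\<^esub>i\<in>I. f i x)"
proof -
  interpret A: abelian_monoid A by fact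
  interpret S: abelian_monoid "skew_group_alg G A act"
    by (rule skew_group_alg_abelian_monoid) fact
  show ?thesis
    using assms(2,3)
  proof (induction I rule: finite_induct)
    case empty
    show ?case
      using assms(4) by (simp add: skew_group_alg_simps)
  next
    case (insert i I)
    have "(\<lambda>i. f i x) \<in> I \<rightarrow> carrier A"
      using insert.prems assms(4) by (auto simp: PiE_iff)
    with insert assms(4) show ?case
      by (auto simp: skew_group_alg_simps PiE_iff)
  qed
qed

lemma triv_ext_simps:
  "carrier (triv_ext K A) = carrier A \<times> lin_dual K A"
  "(a, \<phi>) \<otimes>\<^bsub>triv_ext K A\<^esub> (b, \<psi>) =
     (a \<otimes>\<^bsub>A\<^esub> b, \<lambda>c\<in>carrier A. \<psi> (c \<otimes>\<^bsub>A\<^esub> a) \<oplus>\<^bsub>K\<^esub> \<phi> (b \<otimes>\<^bsub>A\<^esub> c))"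
  "\<one>\<^bsub>triv_ext K A\<^esub> = (\<one>\<^bsub>A\<^esub>, \<lambda>c\<in>carrier A. \<zero>\<^bsub>K\<^esub>)"
  "\<zero>\<^bsub>triv_ext K A\<^esub> = (\<zero>\<^bsub>A\<^esub>, \<lambda>c\<in>carrier A. \<zero>\<^bsub>K\<^esub>)"
  "(a, \<phi>) \<oplus>\<^bsub>triv_ext K A\<^esub> (b, \<psi>) = (a \<oplus>\<^bsub>A\<^esub> b, \<lambda>c\<in>carrier A. \<phi> c \<oplus>\<^bsub>K\<^esub> \<psi> c)"
  "t \<odot>\<^bsub>triv_ext K A\<^esub> (a, \<phi>) = (t \<odot>\<^bsub>A\<^esub> a, \<lambda>c\<in>carrier A. t \<otimes>\<^bsub>K\<^esub> \<phi> c)"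
  by (simp_all add: triv_ext_def)

lemma lin_dual_zero_closed:
  assumes "module K A"
  shows "(\<lambda>c\<in>carrier A. \<zero>\<^bsub>K\<^esub>) \<in> lin_dual K A"
proof -
  interpret K: cring K using assms by (rule module.axioms)
  interpret A: module K A by fact
  show ?thesis by (rule lin_dualI) auto
qed

lemma lin_dual_add_closed:
  assumes "module K A" "\<phi> \<in> lin_dual K A" "\<psi> \<in> lin_dual K A"
  shows "(\<lambda>c\<in>carrier A. \<phi> c \<oplus>\<^bsub>K\<^esub> \<psi> c) \<in> lin_dual K A"
proof -
  interpret K: cring K using assms(1) by (rule module.axioms)
  interpret A: module K A by fact
  show ?thesis
    using assms(2,3)
    by (intro lin_dualI) (auto simp: lin_dual_closed lin_dual_add lin_dual_smult K.r_distr K.a_ac)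
qed

lemma triv_ext_abelian_monoid:
  assumes "module K A"
  shows "abelian_monoid (triv_ext K A)"
proof -
  interpret K: cring K using assms by (rule module.axioms)
  interpret A: module K A by fact
  note closed = lin_dual_zero_closed[OF assms] lin_dual_add_closed[OF assms] lin_dual_closed
  show ?thesis
  proof (rule abelian_monoidI)
    show "\<zero>\<^bsub>triv_ext K A\<^esub> \<in> carrier (triv_ext K A)"
      using closed by (simp add: triv_ext_simps)
  next
    fix x y z
    assume "x \<in> carrier (triv_ext K A)" "y \<in> carrier (triv_ext K A)" "z \<in> carrier (triv_ext K A)"
    then obtain a \<phi> b \<psi> c \<chi> where xyz: "x = (a, \<phi>)" "y = (b, \<psi>)" "z = (c, \<chi>)"
      and mem: "a \<in> carrier A" "b \<in> carrier A" "c \<in> carrier A"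
        "\<phi> \<in> lin_dual K A" "\<psi> \<in> lin_dual K A" "\<chi> \<in> lin_dual K A"
      by (auto simp: triv_ext_simps)
    show "x \<oplus>\<^bsub>triv_ext K A\<^esub> y \<in> carrier (triv_ext K A)"
      using mem closed by (simp add: xyz triv_ext_simps)
    show "x \<oplus>\<^bsub>triv_ext K A\<^esub> y \<oplus>\<^bsub>triv_ext K A\<^esub> z = x \<oplus>\<^bsub>triv_ext K A\<^esub> (y \<oplus>\<^bsub>triv_ext K A\<^esub> z)"
      using mem by (auto simp: xyz triv_ext_simps A.a_assoc K.a_assoc lin_dual_closed intro!: restrict_ext)
    show "x \<oplus>\<^bsub>triv_ext K A\<^esub> y = y \<oplus>\<^bsub>triv_ext K A\<^esub> x"
      using mem by (auto simp: xyz triv_ext_simps A.a_comm K.a_comm lin_dual_closed intro!: restrict_ext)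
    show "\<zero>\<^bsub>triv_ext K A\<^esub> \<oplus>\<^bsub>triv_ext K A\<^esub> x = x"
    proof -
      have "(\<lambda>c\<in>carrier A. (\<lambda>c\<in>carrier A. \<zero>\<^bsub>K\<^esub>) c \<oplus>\<^bsub>K\<^esub> \<phi> c) = \<phi>"
        using mem by (intro extensionalityI[OF restrict_extensional lin_dual_extensional])
          (auto simp: lin_dual_closed)
      then show ?thesis
        using mem by (simp add: xyz triv_ext_simps)
    qed
  qed
qed

lemma finsum_triv_ext:
  assumes "module K A" "finite I" "f \<in> I \<rightarrow> carrier (triv_ext K A)"
  shows "finsum (triv_ext K A) f I =
    (\<Oplus>\<^bsub>A\<^esub>i\<in>I. fst (f i), \<lambda>c\<in>carrier A. \<Oplus>\<^bsub>K\<^esub>i\<in>I. snd (f i) c)"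
proof -
  interpret K: cring K using assms(1) by (rule module.axioms)
  interpret A: module K A by fact
  interpret T: abelian_monoid "triv_ext K A" by (rule triv_ext_abelian_monoid) fact
  show ?thesis
    using assms(2,3)
  proof (induction I rule: finite_induct)
    case empty
    show ?case
      by (simp add: triv_ext_simps) (simp add: restrict_def)
  next
    case (insert i I)
    obtain a \<phi> where fi: "f i = (a, \<phi>)" by (cases "f i")
    have "(\<lambda>i. fst (f i)) \<in> I \<rightarrow> carrier A"
      and "\<And>c. c \<in> carrier A \<Longrightarrow> (\<lambda>i. snd (f i) c) \<in> I \<rightarrow> carrier K"
      using insert.prems by (auto simp: triv_ext_simps Pi_iff mem_Times_iff intro: lin_dual_closed)
    moreover have "a \<in> carrier A" "\<phi> \<in> lin_dual K A"
      using insert.prems fi by (auto simp: triv_ext_simps)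
    ultimately show ?case
      using insert fi by (auto simp: triv_ext_simps lin_dual_closed intro!: restrict_ext)
  qed
qed

lemma (in abelian_monoid) finsum_reindex_bij:
  assumes "bij_betw h A B" "f \<in> B \<rightarrow> carrier G"
  shows "finsum G f B = (\<Oplus>x\<in>A. f (h x))"
  using finsum_reindex[of f h A] assms by (simp add: bij_betw_def)

lemma (in group) inv_bij_betw: "bij_betw (\<lambda>x. inv x) (carrier G) (carrier G)"
  by (rule bij_betw_byWitness[where f' = "\<lambda>x. inv x"]) auto

lemma (in group) inv_mult_bij_betw:
  assumes "x \<in> carrier G"
  shows "bij_betw (\<lambda>h. inv h \<otimes> x) (carrier G) (carrier G)"
  by (rule bij_betw_byWitness[where f' = "\<lambda>g. x \<otimes> inv g"])
     (use assms in \<open>auto simp: inv_mult_group m_assoc[symmetric], simp add: m_assoc\<close>)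

lemma (in group) inv_mult_eq_iff:
  "g \<in> carrier G \<Longrightarrow> y \<in> carrier G \<Longrightarrow> h \<in> carrier G \<Longrightarrow> (inv g \<otimes> y = h) \<longleftrightarrow> (g = y \<otimes> inv h)"
  by (metis inv_closed inv_solve_left' inv_solve_right')

section \<open>A finite group acting on an algebra\<close>

locale finite_alg_action =
  fixes K :: "'k ring" and G :: "'g monoid" and L :: "('k, 'a) module"
    and act :: "'g \<Rightarrow> 'a \<Rightarrow> 'a"
  assumes k_algebra: "k_algebra K L" and group: "group G"
    and finite_carrier: "finite (carrier G)" and alg_action: "alg_action K G L act"
begin

sublocale K: field K
  using k_algebra by (simp add: k_algebra_def)

sublocale L: ring L
  using k_algebra by (simp add: k_algebra_def)

sublocale Lmod: module K L
  using k_algebra by (simp add: k_algebra_def)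

sublocale G: group G
  by (rule group)

lemma smult_mult_left:
  "c \<in> carrier K \<Longrightarrow> x \<in> carrier L \<Longrightarrow> y \<in> carrier L \<Longrightarrow>
    (c \<odot>\<^bsub>L\<^esub> x) \<otimes>\<^bsub>L\<^esub> y = c \<odot>\<^bsub>L\<^esub> (x \<otimes>\<^bsub>L\<^esub> y)"
  using k_algebra by (simp add: k_algebra_def)

lemma smult_mult_right:
  "c \<in> carrier K \<Longrightarrow> x \<in> carrier L \<Longrightarrow> y \<in> carrier L \<Longrightarrow>
    x \<otimes>\<^bsub>L\<^esub> (c \<odot>\<^bsub>L\<^esub> y) = c \<odot>\<^bsub>L\<^esub> (x \<otimes>\<^bsub>L\<^esub> y)"
  using k_algebra by (simp add: k_algebra_def)

lemma act_ring_hom: "g \<in> carrier G \<Longrightarrow> act g \<in> ring_hom L L"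
  using alg_action by (simp add: alg_action_def alg_iso_def ring_iso_def)

lemma act_closed [simp]: "g \<in> carrier G \<Longrightarrow> a \<in> carrier L \<Longrightarrow> act g a \<in> carrier L"
  by (rule ring_hom_closed[OF act_ring_hom])

lemma act_add [simp]:
  "g \<in> carrier G \<Longrightarrow> a \<in> carrier L \<Longrightarrow> b \<in> carrier L \<Longrightarrow>
    act g (a \<oplus>\<^bsub>L\<^esub> b) = act g a \<oplus>\<^bsub>L\<^esub> act g b"
  by (rule ring_hom_add[OF act_ring_hom])

lemma act_mult [simp]:
  "g \<in> carrier G \<Longrightarrow> a \<in> carrier L \<Longrightarrow> b \<in> carrier L \<Longrightarrow>
    act g (a \<otimes>\<^bsub>L\<^esub> b) = act g a \<otimes>\<^bsub>L\<^esub> act g b"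
  by (rule ring_hom_mult[OF act_ring_hom])

lemma act_zero [simp]: "g \<in> carrier G \<Longrightarrow> act g \<zero>\<^bsub>L\<^esub> = \<zero>\<^bsub>L\<^esub>"
  by (rule ring_hom_zero[OF act_ring_hom L.ring_axioms L.ring_axioms])

lemma act_smult [simp]:
  "g \<in> carrier G \<Longrightarrow> c \<in> carrier K \<Longrightarrow> a \<in> carrier L \<Longrightarrow> act g (c \<odot>\<^bsub>L\<^esub> a) = c \<odot>\<^bsub>L\<^esub> act g a"
  using alg_action by (simp add: alg_action_def alg_iso_def)

lemma act_one [simp]: "a \<in> carrier L \<Longrightarrow> act \<one>\<^bsub>G\<^esub> a = a"
  using alg_action by (simp add: alg_action_def)

lemma act_compose:
  "g \<in> carrier G \<Longrightarrow> h \<in> carrier G \<Longrightarrow> a \<in> carrier L \<Longrightarrow>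
    act (g \<otimes>\<^bsub>G\<^esub> h) a = act g (act h a)"
  using alg_action by (simp add: alg_action_def)

lemma act_inv_act [simp]:
  "g \<in> carrier G \<Longrightarrow> a \<in> carrier L \<Longrightarrow> act (inv\<^bsub>G\<^esub> g) (act g a) = a"
  by (metis G.inv_closed G.l_inv act_compose act_one)

lemma act_act_inv [simp]:
  "g \<in> carrier G \<Longrightarrow> a \<in> carrier L \<Longrightarrow> act g (act (inv\<^bsub>G\<^esub> g) a) = a"
  by (metis G.inv_closed G.r_inv act_compose act_one)

abbreviation "LG \<equiv> skew_group_alg G L act"
abbreviation "TL \<equiv> triv_ext K L"
abbreviation "T_LG \<equiv> triv_ext K LG"
abbreviation "TL_G \<equiv> skew_group_alg G TL (triv_action G L act)"

sublocale LG: abelian_monoid LG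
  by (rule skew_group_alg_abelian_monoid) (rule L.abelian_monoid_axioms)

sublocale TL: abelian_monoid TL
  by (rule triv_ext_abelian_monoid) (rule Lmod.module_axioms)

lemma LG_mult_closed:
  "u \<in> carrier LG \<Longrightarrow> v \<in> carrier LG \<Longrightarrow> u \<otimes>\<^bsub>LG\<^esub> v \<in> carrier LG"
  by (auto simp: skew_group_alg_simps PiE_iff intro!: L.finsum_closed)

lemma triv_action_pair [simp]:
  "triv_action G L act g (a, \<phi>) = (act g a, \<lambda>b\<in>carrier L. \<phi> (act (inv\<^bsub>G\<^esub> g) b))"
  by (simp add: triv_action_def)

lemma triv_action_closed:
  assumes "g \<in> carrier G" "p \<in> carrier TL"
  shows "triv_action G L act g p \<in> carrier TL"
  using assms
  by (auto simp: triv_ext_simps lin_dual_closed lin_dual_add lin_dual_smult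
      intro!: lin_dualI)

lemma TL_mult_closed:
  assumes "p \<in> carrier TL" "q \<in> carrier TL"
  shows "p \<otimes>\<^bsub>TL\<^esub> q \<in> carrier TL"
  using assms
  by (auto simp: triv_ext_simps lin_dual_closed lin_dual_add lin_dual_smult L.l_distr L.r_distr
      smult_mult_left smult_mult_right K.a_ac K.r_distr intro!: lin_dualI)

text \<open>\<open>single h d\<close> is the element \<open>d \<otimes> h\<close> of the skew group algebra.\<close>

definition single :: "'g \<Rightarrow> 'a \<Rightarrow> 'g \<Rightarrow> 'a" where
  "single h d = (\<lambda>y\<in>carrier G. if y = h then d else \<zero>\<^bsub>L\<^esub>)"

lemma single_closed [simp]: "d \<in> carrier L \<Longrightarrow> single h d \<in> carrier G \<rightarrow>\<^sub>E carrier L"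
  by (simp add: single_def)

lemma single_apply: "y \<in> carrier G \<Longrightarrow> single h d y = (if y = h then d else \<zero>\<^bsub>L\<^esub>)"
  by (simp add: single_def)

lemma single_add:
  "d \<in> carrier L \<Longrightarrow> d' \<in> carrier L \<Longrightarrow> single h (d \<oplus>\<^bsub>L\<^esub> d') = single h d \<oplus>\<^bsub>LG\<^esub> single h d'"
  by (auto simp: single_def skew_group_alg_simps intro!: restrict_ext)

lemma single_smult:
  "t \<in> carrier K \<Longrightarrow> d \<in> carrier L \<Longrightarrow> single h (t \<odot>\<^bsub>L\<^esub> d) = t \<odot>\<^bsub>LG\<^esub> single h d"
  by (auto simp: single_def skew_group_alg_simps intro!: restrict_ext)

lemma single_components_closed:
  "U \<in> carrier LG \<Longrightarrow> (\<lambda>y. single y (U y)) \<in> carrier G \<rightarrow> carrier LG"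
  unfolding skew_group_alg_carrier by (intro Pi_I single_closed) (rule PiE_mem)

lemma LG_eq_sum_single:
  assumes "U \<in> carrier LG"
  shows "U = (\<Oplus>\<^bsub>LG\<^esub>y\<in>carrier G. single y (U y))"
proof -
  note singles = single_components_closed[OF assms]
  show ?thesis
  proof (rule PiE_ext)
    show "U \<in> carrier G \<rightarrow>\<^sub>E carrier L"
      and "(\<Oplus>\<^bsub>LG\<^esub>y\<in>carrier G. single y (U y)) \<in> carrier G \<rightarrow>\<^sub>E carrier L"
      using assms LG.finsum_closed[OF singles] by simp_all
    fix x assume x: "x \<in> carrier G"
    have "(\<Oplus>\<^bsub>LG\<^esub>y\<in>carrier G. single y (U y)) x =
        (\<Oplus>\<^bsub>L\<^esub>y\<in>carrier G. if x = y then U y else \<zero>\<^bsub>L\<^esub>)"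
      using assms x
      by (simp add: finsum_skew_group_alg_apply[OF L.abelian_monoid_axioms finite_carrier singles x]
          single_apply)
    also have "\<dots> = U x"
      using assms x finite_carrier by (intro L.finsum_singleton) auto
    finally show "U x = (\<Oplus>\<^bsub>LG\<^esub>y\<in>carrier G. single y (U y)) x" ..
  qed
qed

lemma single_mult_right:
  assumes "v \<in> carrier LG" "h \<in> carrier G" "d \<in> carrier L" "y \<in> carrier G"
  shows "(v \<otimes>\<^bsub>LG\<^esub> single h d) y = v (y \<otimes>\<^bsub>G\<^esub> inv\<^bsub>G\<^esub> h) \<otimes>\<^bsub>L\<^esub> act (y \<otimes>\<^bsub>G\<^esub> inv\<^bsub>G\<^esub> h) d"
proof -
  have "(v \<otimes>\<^bsub>LG\<^esub> single h d) y =
      (\<Oplus>\<^bsub>L\<^esub>g\<in>carrier G. if y \<otimes>\<^bsub>G\<^esub> inv\<^bsub>G\<^esub> h = g then v g \<otimes>\<^bsub>L\<^esub> act g d else \<zero>\<^bsub>L\<^esub>)"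
    using assms
    by (auto simp: skew_group_alg_simps single_apply PiE_iff G.inv_mult_eq_iff
        intro!: L.finsum_cong')
  also have "\<dots> = v (y \<otimes>\<^bsub>G\<^esub> inv\<^bsub>G\<^esub> h) \<otimes>\<^bsub>L\<^esub> act (y \<otimes>\<^bsub>G\<^esub> inv\<^bsub>G\<^esub> h) d"
    using assms finite_carrier by (intro L.finsum_singleton) (auto simp: PiE_iff)
  finally show ?thesis .
qed

lemma single_mult_left:
  assumes "u \<in> carrier LG" "h \<in> carrier G" "d \<in> carrier L" "y \<in> carrier G"
  shows "(single h d \<otimes>\<^bsub>LG\<^esub> u) y = d \<otimes>\<^bsub>L\<^esub> act h (u (inv\<^bsub>G\<^esub> h \<otimes>\<^bsub>G\<^esub> y))"
proof -
  have "(single h d \<otimes>\<^bsub>LG\<^esub> u) y =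
      (\<Oplus>\<^bsub>L\<^esub>g\<in>carrier G. if h = g then d \<otimes>\<^bsub>L\<^esub> act g (u (inv\<^bsub>G\<^esub> g \<otimes>\<^bsub>G\<^esub> y)) else \<zero>\<^bsub>L\<^esub>)"
    using assms by (auto simp: skew_group_alg_simps single_apply PiE_iff intro!: L.finsum_cong')
  also have "\<dots> = d \<otimes>\<^bsub>L\<^esub> act h (u (inv\<^bsub>G\<^esub> h \<otimes>\<^bsub>G\<^esub> y))"
    using assms finite_carrier by (intro L.finsum_singleton) (auto simp: PiE_iff)
  finally show ?thesis .
qed

section \<open>The dual of the skew group algebra\<close>

definition dual_component :: "(('g \<Rightarrow> 'a) \<Rightarrow> 'k) \<Rightarrow> 'g \<Rightarrow> 'a \<Rightarrow> 'k" where
  "dual_component \<Phi> x = (\<lambda>c\<in>carrier L. \<Phi> (single (inv\<^bsub>G\<^esub> x) (act (inv\<^bsub>G\<^esub> x) c)))"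

definition dual_from_components :: "('g \<Rightarrow> 'a \<Rightarrow> 'k) \<Rightarrow> ('g \<Rightarrow> 'a) \<Rightarrow> 'k" where
  "dual_from_components f =
     (\<lambda>U\<in>carrier LG. \<Oplus>\<^bsub>K\<^esub>g\<in>carrier G. f g (act g (U (inv\<^bsub>G\<^esub> g))))"

lemma dual_component_lin_dual:
  assumes "\<Phi> \<in> lin_dual K LG" "x \<in> carrier G"
  shows "dual_component \<Phi> x \<in> lin_dual K L"
  using assms
  by (intro lin_dualI)
     (auto simp: dual_component_def single_add single_smult lin_dual_closed lin_dual_add lin_dual_smult)

lemma dual_component_closed:
  "\<Phi> \<in> lin_dual K LG \<Longrightarrow> x \<in> carrier G \<Longrightarrow> c \<in> carrier L \<Longrightarrow> dual_component \<Phi> x c \<in> carrier K"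
  by (rule lin_dual_closed[OF dual_component_lin_dual])

lemma lin_dual_single:
  assumes "\<Phi> \<in> lin_dual K LG" "h \<in> carrier G" "d \<in> carrier L"
  shows "\<Phi> (single h d) = dual_component \<Phi> (inv\<^bsub>G\<^esub> h) (act (inv\<^bsub>G\<^esub> h) d)"
  using assms by (simp add: dual_component_def)

lemma lin_dual_expansion:
  assumes \<Phi>: "\<Phi> \<in> lin_dual K LG" and U: "U \<in> carrier LG"
  shows "\<Phi> U = (\<Oplus>\<^bsub>K\<^esub>g\<in>carrier G. dual_component \<Phi> g (act g (U (inv\<^bsub>G\<^esub> g))))"
proof -
  note singles = single_components_closed[OF U]
  have "\<Phi> U = (\<Oplus>\<^bsub>K\<^esub>y\<in>carrier G. \<Phi> (single y (U y)))"
    by (subst LG_eq_sum_single[OF U])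
       (rule lin_dual_finsum[OF K.abelian_group_axioms LG.abelian_monoid_axioms \<Phi> finite_carrier singles])
  also have "\<dots> = (\<Oplus>\<^bsub>K\<^esub>g\<in>carrier G. \<Phi> (single (inv\<^bsub>G\<^esub> g) (U (inv\<^bsub>G\<^esub> g))))"
    by (intro K.finsum_reindex_bij G.inv_bij_betw Pi_I lin_dual_closed[OF \<Phi>] funcset_mem[OF singles])
  also have "\<dots> = (\<Oplus>\<^bsub>K\<^esub>g\<in>carrier G. dual_component \<Phi> g (act g (U (inv\<^bsub>G\<^esub> g))))"
    using U by (intro K.finsum_cong') (auto simp: lin_dual_single[OF \<Phi>] dual_component_closed[OF \<Phi>] PiE_iff)
  finally show ?thesis .
qed

lemma dual_from_components_lin_dual:
  assumes f: "\<And>x. x \<in> carrier G \<Longrightarrow> f x \<in> lin_dual K L"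
  shows "dual_from_components f \<in> lin_dual K LG"
proof (rule lin_dualI)
  have summands: "(\<lambda>g. f g (act g (U (inv\<^bsub>G\<^esub> g)))) \<in> carrier G \<rightarrow> carrier K"
    if "U \<in> carrier LG" for U
    using that by (auto simp: PiE_iff intro!: lin_dual_closed[OF f])
  show "dual_from_components f \<in> extensional (carrier LG)"
    by (simp add: dual_from_components_def)
  show "dual_from_components f U \<in> carrier K" if "U \<in> carrier LG" for U
    using summands[OF that] that by (simp add: dual_from_components_def K.finsum_closed)
  show "dual_from_components f (U \<oplus>\<^bsub>LG\<^esub> V) =
      dual_from_components f U \<oplus>\<^bsub>K\<^esub> dual_from_components f V"
    if U: "U \<in> carrier LG" and V: "V \<in> carrier LG" for U V
  proof -
    have "dual_from_components f (U \<oplus>\<^bsub>LG\<^esub> V) =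
        (\<Oplus>\<^bsub>K\<^esub>g\<in>carrier G. f g (act g ((U \<oplus>\<^bsub>LG\<^esub> V) (inv\<^bsub>G\<^esub> g))))"
      using LG.a_closed[OF U V] by (simp add: dual_from_components_def)
    also have "\<dots> = (\<Oplus>\<^bsub>K\<^esub>g\<in>carrier G. f g (act g (U (inv\<^bsub>G\<^esub> g))) \<oplus>\<^bsub>K\<^esub> f g (act g (V (inv\<^bsub>G\<^esub> g))))"
      using U V by (intro K.finsum_cong')
        (auto simp: skew_group_alg_simps PiE_iff lin_dual_add[OF f] lin_dual_closed[OF f])
    also have "\<dots> = dual_from_components f U \<oplus>\<^bsub>K\<^esub> dual_from_components f V"
      using U V by (simp add: K.finsum_addf[OF summands summands] dual_from_components_def)
    finally show ?thesis .
  qed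
  show "dual_from_components f (t \<odot>\<^bsub>LG\<^esub> U) = t \<otimes>\<^bsub>K\<^esub> dual_from_components f U"
    if t: "t \<in> carrier K" and U: "U \<in> carrier LG" for t U
  proof -
    have "dual_from_components f (t \<odot>\<^bsub>LG\<^esub> U) =
        (\<Oplus>\<^bsub>K\<^esub>g\<in>carrier G. f g (act g ((t \<odot>\<^bsub>LG\<^esub> U) (inv\<^bsub>G\<^esub> g))))"
      using t U by (simp add: dual_from_components_def skew_group_alg_simps PiE_iff)
    also have "\<dots> = (\<Oplus>\<^bsub>K\<^esub>g\<in>carrier G. t \<otimes>\<^bsub>K\<^esub> f g (act g (U (inv\<^bsub>G\<^esub> g))))"
      using t U by (intro K.finsum_cong')
        (auto simp: skew_group_alg_simps PiE_iff lin_dual_smult[OF f] lin_dual_closed[OF f])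
    also have "\<dots> = t \<otimes>\<^bsub>K\<^esub> dual_from_components f U"
      using t U by (simp add: K.finsum_rdistr[OF finite_carrier t summands] dual_from_components_def)
    finally show ?thesis .
  qed
qed

lemma dual_component_dual_from_components:
  assumes f: "\<And>x. x \<in> carrier G \<Longrightarrow> f x \<in> lin_dual K L" and x: "x \<in> carrier G"
  shows "dual_component (dual_from_components f) x = f x"
proof (rule lin_dual_eqI[OF dual_component_lin_dual[OF dual_from_components_lin_dual[OF f] x] f[OF x]])
  fix c assume c: "c \<in> carrier L"
  have "dual_component (dual_from_components f) x c =
      (\<Oplus>\<^bsub>K\<^esub>g\<in>carrier G. if x = g then f g c else \<zero>\<^bsub>K\<^esub>)"
    using x c f
    by (auto simp: dual_component_def dual_from_components_def single_apply inj_on_eq_iff[OF G.inv_inj]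
        lin_dual_closed[OF f] lin_dual_zero[OF K.abelian_group_axioms L.abelian_monoid_axioms]
        intro!: K.finsum_cong')
  also have "\<dots> = f x c"
    using x c finite_carrier by (intro K.finsum_singleton) (auto simp: lin_dual_closed[OF f])
  finally show "dual_component (dual_from_components f) x c = f x c" .
qed

lemma lin_dual_mult_single_right:
  assumes \<Phi>: "\<Phi> \<in> lin_dual K LG" and v: "v \<in> carrier LG" and x: "x \<in> carrier G"
    and c: "c \<in> carrier L"
  shows "\<Phi> (v \<otimes>\<^bsub>LG\<^esub> single (inv\<^bsub>G\<^esub> x) (act (inv\<^bsub>G\<^esub> x) c)) =
    (\<Oplus>\<^bsub>K\<^esub>g\<in>carrier G. dual_component \<Phi> g (act g (v (inv\<^bsub>G\<^esub> g \<otimes>\<^bsub>G\<^esub> x)) \<otimes>\<^bsub>L\<^esub> c))"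
proof -
  let ?C = "single (inv\<^bsub>G\<^esub> x) (act (inv\<^bsub>G\<^esub> x) c)"
  have C: "?C \<in> carrier LG"
    using x c by simp
  have "\<Phi> (v \<otimes>\<^bsub>LG\<^esub> ?C) =
      (\<Oplus>\<^bsub>K\<^esub>g\<in>carrier G. dual_component \<Phi> g (act g ((v \<otimes>\<^bsub>LG\<^esub> ?C) (inv\<^bsub>G\<^esub> g))))"
    by (rule lin_dual_expansion[OF \<Phi> LG_mult_closed[OF v C]])
  also have "\<dots> = (\<Oplus>\<^bsub>K\<^esub>g\<in>carrier G. dual_component \<Phi> g (act g (v (inv\<^bsub>G\<^esub> g \<otimes>\<^bsub>G\<^esub> x)) \<otimes>\<^bsub>L\<^esub> c))"
    using v x c
    by (intro K.finsum_cong')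
       (auto simp: single_mult_right act_compose dual_component_closed[OF \<Phi>] PiE_iff)
  finally show ?thesis .
qed

lemma lin_dual_mult_single_left:
  assumes \<Phi>: "\<Phi> \<in> lin_dual K LG" and u: "u \<in> carrier LG" and x: "x \<in> carrier G"
    and c: "c \<in> carrier L"
  shows "\<Phi> (single (inv\<^bsub>G\<^esub> x) (act (inv\<^bsub>G\<^esub> x) c) \<otimes>\<^bsub>LG\<^esub> u) =
    (\<Oplus>\<^bsub>K\<^esub>g\<in>carrier G. dual_component \<Phi> (inv\<^bsub>G\<^esub> g \<otimes>\<^bsub>G\<^esub> x) (act (inv\<^bsub>G\<^esub> g) (c \<otimes>\<^bsub>L\<^esub> u g)))"
proof -
  let ?C = "single (inv\<^bsub>G\<^esub> x) (act (inv\<^bsub>G\<^esub> x) c)"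
  let ?term = "\<lambda>g. dual_component \<Phi> g (act g ((?C \<otimes>\<^bsub>LG\<^esub> u) (inv\<^bsub>G\<^esub> g)))"
  have C: "?C \<in> carrier LG"
    using x c by simp
  have Cu: "?C \<otimes>\<^bsub>LG\<^esub> u \<in> carrier LG"
    by (rule LG_mult_closed[OF C u])
  have "\<Phi> (?C \<otimes>\<^bsub>LG\<^esub> u) = (\<Oplus>\<^bsub>K\<^esub>g\<in>carrier G. ?term g)"
    by (rule lin_dual_expansion[OF \<Phi> Cu])
  also have "\<dots> = (\<Oplus>\<^bsub>K\<^esub>h\<in>carrier G. ?term (inv\<^bsub>G\<^esub> h \<otimes>\<^bsub>G\<^esub> x))"
    using Cu by (intro K.finsum_reindex_bij G.inv_mult_bij_betw x)
      (auto simp: dual_component_closed[OF \<Phi>] PiE_iff)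
  also have "\<dots> = (\<Oplus>\<^bsub>K\<^esub>g\<in>carrier G. dual_component \<Phi> (inv\<^bsub>G\<^esub> g \<otimes>\<^bsub>G\<^esub> x) (act (inv\<^bsub>G\<^esub> g) (c \<otimes>\<^bsub>L\<^esub> u g)))"
    using u x c
    by (intro K.finsum_cong')
       (auto simp: single_mult_left act_compose dual_component_closed[OF \<Phi>] PiE_iff
         G.inv_mult_group G.m_assoc[symmetric])
  finally show ?thesis .
qed

section \<open>The isomorphism of trivial extensions\<close>

definition triv_iso :: "('g \<Rightarrow> 'a) \<times> (('g \<Rightarrow> 'a) \<Rightarrow> 'k) \<Rightarrow> 'g \<Rightarrow> 'a \<times> ('a \<Rightarrow> 'k)" where
  "triv_iso = (\<lambda>(u, \<Phi>). \<lambda>x\<in>carrier G. (u x, dual_component \<Phi> x))"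

definition triv_iso_inv :: "('g \<Rightarrow> 'a \<times> ('a \<Rightarrow> 'k)) \<Rightarrow> ('g \<Rightarrow> 'a) \<times> (('g \<Rightarrow> 'a) \<Rightarrow> 'k)" where
  "triv_iso_inv w = ((\<lambda>x\<in>carrier G. fst (w x)), dual_from_components (\<lambda>x. snd (w x)))"

lemma triv_iso_apply:
  "x \<in> carrier G \<Longrightarrow> triv_iso p x = (fst p x, dual_component (snd p) x)"
  by (simp add: triv_iso_def split: prod.split)

lemma triv_iso_closed:
  "p \<in> carrier T_LG \<Longrightarrow> triv_iso p \<in> carrier TL_G"
  by (auto simp: triv_iso_def triv_ext_simps dual_component_lin_dual PiE_iff)

lemma triv_iso_value_closed:
  "p \<in> carrier T_LG \<Longrightarrow> g \<in> carrier G \<Longrightarrow> triv_iso p g \<in> carrier TL"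
  using triv_iso_closed by (simp add: PiE_iff)

lemma triv_iso_inv_closed:
  assumes "w \<in> carrier TL_G"
  shows "triv_iso_inv w \<in> carrier T_LG"
proof -
  have "snd (w x) \<in> lin_dual K L" if "x \<in> carrier G" for x
    using assms that by (auto simp: triv_ext_simps PiE_iff mem_Times_iff)
  then show ?thesis
    using assms by (auto simp: triv_iso_inv_def triv_ext_simps PiE_iff mem_Times_iff
        intro!: dual_from_components_lin_dual)
qed

lemma triv_iso_bij: "bij_betw triv_iso (carrier T_LG) (carrier TL_G)"
proof (rule bij_betw_byWitness[where f' = triv_iso_inv])
  show "\<forall>p\<in>carrier T_LG. triv_iso_inv (triv_iso p) = p"
  proof
    fix p assume "p \<in> carrier T_LG"
    then obtain u \<Phi> where p: "p = (u, \<Phi>)" and u: "u \<in> carrier LG" and \<Phi>: "\<Phi> \<in> lin_dual K LG"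
      by (auto simp: triv_ext_simps)
    have "dual_from_components (\<lambda>x. snd (triv_iso p x)) = \<Phi>"
    proof (rule lin_dual_eqI[OF dual_from_components_lin_dual \<Phi>])
      show "snd (triv_iso p x) \<in> lin_dual K L" if "x \<in> carrier G" for x
        using that by (simp add: p triv_iso_apply dual_component_lin_dual[OF \<Phi>])
      show "dual_from_components (\<lambda>x. snd (triv_iso p x)) U = \<Phi> U" if "U \<in> carrier LG" for U
        using that by (auto simp: dual_from_components_def p triv_iso_apply PiE_iff
            lin_dual_expansion[OF \<Phi>] dual_component_closed[OF \<Phi>] intro!: K.finsum_cong')
    qed
    moreover have "(\<lambda>x\<in>carrier G. fst (triv_iso p x)) = u"
      using u by (intro extensionalityI[OF restrict_extensional]) (auto simp: p triv_iso_apply PiE_iff)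
    ultimately show "triv_iso_inv (triv_iso p) = p"
      by (simp add: triv_iso_inv_def p)
  qed
  show "\<forall>w\<in>carrier TL_G. triv_iso (triv_iso_inv w) = w"
  proof
    fix w assume w: "w \<in> carrier TL_G"
    then have components: "snd (w x) \<in> lin_dual K L" if "x \<in> carrier G" for x
      using that by (auto simp: triv_ext_simps PiE_iff mem_Times_iff)
    show "triv_iso (triv_iso_inv w) = w"
    proof (rule PiE_ext)
      show "triv_iso (triv_iso_inv w) \<in> carrier G \<rightarrow>\<^sub>E carrier TL" "w \<in> carrier G \<rightarrow>\<^sub>E carrier TL"
        using triv_iso_closed[OF triv_iso_inv_closed[OF w]] w by simp_all
      show "triv_iso (triv_iso_inv w) x = w x" if "x \<in> carrier G" for x
        using that by (simp add: triv_iso_inv_def triv_iso_apply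
            dual_component_dual_from_components[OF components])
    qed
  qed
  show "triv_iso ` carrier T_LG \<subseteq> carrier TL_G"
    using triv_iso_closed by blast
  show "triv_iso_inv ` carrier TL_G \<subseteq> carrier T_LG"
    using triv_iso_inv_closed by blast
qed

lemma triv_iso_add:
  assumes "p \<in> carrier T_LG" "q \<in> carrier T_LG"
  shows "triv_iso (p \<oplus>\<^bsub>T_LG\<^esub> q) = triv_iso p \<oplus>\<^bsub>TL_G\<^esub> triv_iso q"
  using assms
  by (auto simp: triv_iso_def triv_ext_simps skew_group_alg_simps dual_component_def
      intro!: restrict_ext)

lemma triv_iso_smult:
  assumes "t \<in> carrier K" "p \<in> carrier T_LG"
  shows "triv_iso (t \<odot>\<^bsub>T_LG\<^esub> p) = t \<odot>\<^bsub>TL_G\<^esub> triv_iso p"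
  using assms
  by (auto simp: triv_iso_def triv_ext_simps skew_group_alg_simps dual_component_def
      intro!: restrict_ext)

lemma triv_iso_one: "triv_iso \<one>\<^bsub>T_LG\<^esub> = \<one>\<^bsub>TL_G\<^esub>"
  by (auto simp: triv_iso_def triv_ext_simps skew_group_alg_simps dual_component_def
      intro!: restrict_ext)

lemma dual_component_triv_mult:
  assumes u: "u \<in> carrier LG" and \<Phi>: "\<Phi> \<in> lin_dual K LG"
    and u': "u' \<in> carrier LG" and \<Phi>': "\<Phi>' \<in> lin_dual K LG"
    and x: "x \<in> carrier G" and c: "c \<in> carrier L"
  shows "dual_component (snd ((u, \<Phi>) \<otimes>\<^bsub>T_LG\<^esub> (u', \<Phi>'))) x c =
    (\<Oplus>\<^bsub>K\<^esub>g\<in>carrier G. dual_component \<Phi>' (inv\<^bsub>G\<^esub> g \<otimes>\<^bsub>G\<^esub> x) (act (inv\<^bsub>G\<^esub> g) (c \<otimes>\<^bsub>L\<^esub> u g))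
       \<oplus>\<^bsub>K\<^esub> dual_component \<Phi> g (act g (u' (inv\<^bsub>G\<^esub> g \<otimes>\<^bsub>G\<^esub> x)) \<otimes>\<^bsub>L\<^esub> c))"
    (is "_ = ?rhs")
proof -
  let ?C = "single (inv\<^bsub>G\<^esub> x) (act (inv\<^bsub>G\<^esub> x) c)"
  have "dual_component (snd ((u, \<Phi>) \<otimes>\<^bsub>T_LG\<^esub> (u', \<Phi>'))) x c =
      \<Phi>' (?C \<otimes>\<^bsub>LG\<^esub> u) \<oplus>\<^bsub>K\<^esub> \<Phi> (u' \<otimes>\<^bsub>LG\<^esub> ?C)"
    using x c by (simp add: dual_component_def triv_ext_simps)
  also have "\<dots> =
      (\<Oplus>\<^bsub>K\<^esub>g\<in>carrier G. dual_component \<Phi>' (inv\<^bsub>G\<^esub> g \<otimes>\<^bsub>G\<^esub> x) (act (inv\<^bsub>G\<^esub> g) (c \<otimes>\<^bsub>L\<^esub> u g))) \<oplus>\<^bsub>K\<^esub>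
      (\<Oplus>\<^bsub>K\<^esub>g\<in>carrier G. dual_component \<Phi> g (act g (u' (inv\<^bsub>G\<^esub> g \<otimes>\<^bsub>G\<^esub> x)) \<otimes>\<^bsub>L\<^esub> c))"
    by (simp only: lin_dual_mult_single_left[OF \<Phi>' u x c] lin_dual_mult_single_right[OF \<Phi> u' x c])
  also have "\<dots> = ?rhs"
    using u u' x c
    by (intro K.finsum_addf[symmetric])
       (auto simp: dual_component_closed[OF \<Phi>] dual_component_closed[OF \<Phi>'] PiE_iff)
  finally show ?thesis .
qed

lemma triv_iso_mult_apply:
  assumes p: "p \<in> carrier T_LG" and q: "q \<in> carrier T_LG" and x: "x \<in> carrier G"
  shows "(triv_iso p \<otimes>\<^bsub>TL_G\<^esub> triv_iso q) x = triv_iso (p \<otimes>\<^bsub>T_LG\<^esub> q) x"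
proof -
  obtain u \<Phi> u' \<Phi>' where pq: "p = (u, \<Phi>)" "q = (u', \<Phi>')"
    and u: "u \<in> carrier LG" and \<Phi>: "\<Phi> \<in> lin_dual K LG"
    and u': "u' \<in> carrier LG" and \<Phi>': "\<Phi>' \<in> lin_dual K LG"
    using p q by (auto simp: triv_ext_simps)
  let ?summand = "\<lambda>g. triv_iso p g \<otimes>\<^bsub>TL\<^esub> triv_action G L act g (triv_iso q (inv\<^bsub>G\<^esub> g \<otimes>\<^bsub>G\<^esub> x))"
  have summand: "?summand g = (u g \<otimes>\<^bsub>L\<^esub> act g (u' (inv\<^bsub>G\<^esub> g \<otimes>\<^bsub>G\<^esub> x)), \<lambda>c\<in>carrier L.
      dual_component \<Phi>' (inv\<^bsub>G\<^esub> g \<otimes>\<^bsub>G\<^esub> x) (act (inv\<^bsub>G\<^esub> g) (c \<otimes>\<^bsub>L\<^esub> u g))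
        \<oplus>\<^bsub>K\<^esub> dual_component \<Phi> g (act g (u' (inv\<^bsub>G\<^esub> g \<otimes>\<^bsub>G\<^esub> x)) \<otimes>\<^bsub>L\<^esub> c))"
    if g: "g \<in> carrier G" for g
    using g x u by (simp add: pq triv_iso_apply triv_ext_simps PiE_iff cong: restrict_cong)
  have "?summand \<in> carrier G \<rightarrow> carrier TL"
    using p q x by (intro Pi_I TL_mult_closed triv_action_closed triv_iso_value_closed) auto
  then have "(triv_iso p \<otimes>\<^bsub>TL_G\<^esub> triv_iso q) x =
      (\<Oplus>\<^bsub>L\<^esub>g\<in>carrier G. fst (?summand g), \<lambda>c\<in>carrier L. \<Oplus>\<^bsub>K\<^esub>g\<in>carrier G. snd (?summand g) c)"
    using x by (simp add: skew_group_alg_simps finsum_triv_ext[OF Lmod.module_axioms finite_carrier])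
  also have "(\<Oplus>\<^bsub>L\<^esub>g\<in>carrier G. fst (?summand g)) = (u \<otimes>\<^bsub>LG\<^esub> u') x"
    using x u u' by (auto simp: summand skew_group_alg_simps PiE_iff intro!: L.finsum_cong')
  also have "(\<lambda>c\<in>carrier L. \<Oplus>\<^bsub>K\<^esub>g\<in>carrier G. snd (?summand g) c) =
      dual_component (snd (p \<otimes>\<^bsub>T_LG\<^esub> q)) x"
  proof (rule extensionalityI[OF restrict_extensional])
    show "dual_component (snd (p \<otimes>\<^bsub>T_LG\<^esub> q)) x \<in> extensional (carrier L)"
      by (simp add: dual_component_def)
    fix c assume c: "c \<in> carrier L"
    have "(\<Oplus>\<^bsub>K\<^esub>g\<in>carrier G. snd (?summand g) c) = (\<Oplus>\<^bsub>K\<^esub>g\<in>carrier G.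
        dual_component \<Phi>' (inv\<^bsub>G\<^esub> g \<otimes>\<^bsub>G\<^esub> x) (act (inv\<^bsub>G\<^esub> g) (c \<otimes>\<^bsub>L\<^esub> u g))
          \<oplus>\<^bsub>K\<^esub> dual_component \<Phi> g (act g (u' (inv\<^bsub>G\<^esub> g \<otimes>\<^bsub>G\<^esub> x)) \<otimes>\<^bsub>L\<^esub> c))"
      using x u u' c
      by (intro K.finsum_cong')
         (auto simp: summand PiE_iff dual_component_closed[OF \<Phi>] dual_component_closed[OF \<Phi>'])
    then show "(\<lambda>c\<in>carrier L. \<Oplus>\<^bsub>K\<^esub>g\<in>carrier G. snd (?summand g) c) c =
        dual_component (snd (p \<otimes>\<^bsub>T_LG\<^esub> q)) x c"
      using c by (simp add: pq dual_component_triv_mult[OF u \<Phi> u' \<Phi>' x c])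
  qed
  finally show ?thesis
    using x by (simp add: triv_iso_apply pq triv_ext_simps)
qed

lemma triv_iso_mult:
  assumes "p \<in> carrier T_LG" "q \<in> carrier T_LG"
  shows "triv_iso (p \<otimes>\<^bsub>T_LG\<^esub> q) = triv_iso p \<otimes>\<^bsub>TL_G\<^esub> triv_iso q"
proof (rule extensionalityI)
  show "triv_iso (p \<otimes>\<^bsub>T_LG\<^esub> q) \<in> extensional (carrier G)"
    by (simp add: triv_iso_def split: prod.split)
  show "triv_iso p \<otimes>\<^bsub>TL_G\<^esub> triv_iso q \<in> extensional (carrier G)"
    by (simp add: skew_group_alg_simps)
  show "triv_iso (p \<otimes>\<^bsub>T_LG\<^esub> q) x = (triv_iso p \<otimes>\<^bsub>TL_G\<^esub> triv_iso q) x" if "x \<in> carrier G" for x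
    using triv_iso_mult_apply[OF assms that] by simp
qed

lemma triv_iso_alg_iso: "alg_iso K T_LG TL_G triv_iso"
  unfolding alg_iso_def ring_iso_def ring_hom_def
  using triv_iso_closed triv_iso_mult triv_iso_add triv_iso_one triv_iso_bij triv_iso_smult
  by auto

end

theorem proposition1p4:
  fixes K :: "'k ring" and G :: "'g monoid" and L :: "('k, 'a) module"
    and act :: "'g \<Rightarrow> 'a \<Rightarrow> 'a"
  assumes "algebraically_closed K"
    and "comm_group G" and "finite (carrier G)"
    and "[card (carrier G)] \<cdot>\<^bsub>K\<^esub> \<one>\<^bsub>K\<^esub> \<in> Units K"
    and "k_algebra K L" and "fin_dim K L"
    and "alg_action K G L act"
  shows "alg_isomorphic K (triv_ext K (skew_group_alg G L act))
           (skew_group_alg G (triv_ext K L) (triv_action G L act))"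
proof -
  interpret finite_alg_action K G L act
    by (rule finite_alg_action.intro) (use assms comm_group.axioms(2) in blast)+
  show ?thesis
    unfolding alg_isomorphic_def using triv_iso_alg_iso by blast
qed

end
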